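(* $\mathcal T^+=G\gamma^+$ and $\mathcal T^-=G\gamma^-$, where $\gamma^+=\{(i\sin u,0,\cos u):0<u<\pi\}$ and $\gamma^-=\{(i\sin u,0,\cos u):-\pi<u<0\}$, i.e. $\mathcal T^\pm$ is the union of the orbits under $G$ of the points of $\gamma^\pm$.
   Context: $[z\cdot z']=z_0z'_0-z_1z'_1-z_2z'_2$ on $\mathbb C^3$, $z^2=[z\cdot z]$; $X^{(c)}=\{z\in\mathbb C^3:z^2=-1\}$, $z=x+iy$; $V^+=\{y\in\mathbb R^3:y^2>0,y_0>0\}$, $V^-=-V^+$; $\mathcal T^\pm=\{z=x+iy\in X^{(c)}:y\in V^\pm\}$; $G=SO_0(1,2)$ (connected component of the group of real linear maps preserving $[\cdot]$), acting on $X^{(c)}$ by $gz=gx+igy$. *)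

theory Defs
  imports "HOL-Analysis.Analysis"
begin

text \<open>Coordinates z = (z0,z1,z2) are indexed by the type 3 with z0 = z$1, z1 = z$2, z2 = z$3.\<close>

definition mink :: "'a::comm_ring_1 ^ 3 \<Rightarrow> 'a ^ 3 \<Rightarrow> 'a" where
  "mink z w = z$1 * w$1 - z$2 * w$2 - z$3 * w$3"

definition Xc :: "(complex ^ 3) set" where
  "Xc = {z. mink z z = -1}"

definition re_part :: "complex ^ 3 \<Rightarrow> real ^ 3" where
  "re_part z = (\<chi> i. Re (z$i))"

definition im_part :: "complex ^ 3 \<Rightarrow> real ^ 3" where
  "im_part z = (\<chi> i. Im (z$i))"

definition Vplus :: "(real ^ 3) set" where
  "Vplus = {y. mink y y > 0 \<and> y$1 > 0}"

definition Vminus :: "(real ^ 3) set" where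
  "Vminus = uminus ` Vplus"

definition Tplus :: "(complex ^ 3) set" where
  "Tplus = {z \<in> Xc. im_part z \<in> Vplus}"

definition Tminus :: "(complex ^ 3) set" where
  "Tminus = {z \<in> Xc. im_part z \<in> Vminus}"

definition O12 :: "(real ^ 3 ^ 3) set" where
  "O12 = {g. \<forall>x y. mink (g *v x) (g *v y) = mink x y}"

definition G :: "(real ^ 3 ^ 3) set" where
  "G = connected_component_set O12 (mat 1)"

definition act :: "real ^ 3 ^ 3 \<Rightarrow> complex ^ 3 \<Rightarrow> complex ^ 3" where
  "act g z = (\<chi> i. Complex ((g *v re_part z)$i) ((g *v im_part z)$i))"

definition gamma_pt :: "real \<Rightarrow> complex ^ 3" where
  "gamma_pt u = vector [\<i> * complex_of_real (sin u), 0, complex_of_real (cos u)]"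

definition gamma_plus :: "(complex ^ 3) set" where
  "gamma_plus = gamma_pt ` {0<..<pi}"

definition gamma_minus :: "(complex ^ 3) set" where
  "gamma_minus = gamma_pt ` {-pi<..<0}"

end

theory Submission
  imports Defs
begin

text \<open>Writing z = x + i y, the point z lies on X iff [x, x] - [y, y] = -1 and [x, y] = 0. The group G
  preserves the form and, being connected, also the cone V+, since the time coordinate of a
  timelike vector cannot vanish; hence G gamma+ lies in T+. Conversely, for z in T+ the vector y
  is timelike and x, being orthogonal to it, is spacelike or zero; so [y, y] = (sin u)^2 and
  [x, x] = - (cos u)^2 for some u in (0, pi/2]. A rotation after a boost maps e0 to y / sin u, and
  a further rotation about e0 maps e2 to x / cos u. Complex conjugation exchanges T+ with T- and
  gamma+ with gamma-, and commutes with the real action of G, which gives the statement for T-.\<close>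

lemma continuous_on_vector3 [continuous_intros]:
  fixes a b c :: "'a::topological_space \<Rightarrow> 'b::real_normed_vector"
  assumes "continuous_on S a" "continuous_on S b" "continuous_on S c"
  shows "continuous_on S (\<lambda>s. vector [a s, b s, c s] :: 'b^3)"
proof -
  have "continuous_on S (\<lambda>s. \<chi> i. (vector [a s, b s, c s] :: 'b^3) $ i)"
  proof (intro continuous_on_vec_lambda)
    fix i :: 3
    show "continuous_on S (\<lambda>s. vector [a s, b s, c s] $ i)"
      using exhaust_3[of i] assms by auto
  qed
  then show ?thesis
    by simp
qed

lemma vector3_matrix_vector_mult:
  "(vector [vector [a, b, c], vector [d, e, f], vector [g, h, k]] :: 'a::comm_ring_1^3^3) *v w =
    vector [a * w$1 + b * w$2 + c * w$3, d * w$1 + e * w$2 + f * w$3, g * w$1 + h * w$2 + k * w$3]"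
  by (simp add: vec_eq_iff forall_3 matrix_vector_mult_def sum_3)

lemma mink_commute: "mink x y = mink y x"
  by (simp add: mink_def algebra_simps)

lemma mink_scaleR: "mink (a *\<^sub>R x) (b *\<^sub>R y) = a * b * mink x (y :: real^3)"
  by (simp add: mink_def algebra_simps)

lemma mink_uminus_right: "mink x (- y) = - mink x (y :: real^3)"
  by (simp add: mink_def)

lemma mink_uminus_left: "mink (- x) y = - mink x (y :: real^3)"
  by (simp add: mink_def)

lemma mink_orthogonal_timelike_neg:
  fixes x y :: "real^3"
  assumes orth: "mink x y = 0" and timelike: "mink y y > 0" and "x \<noteq> 0"
  shows "mink x x < 0"
proof -
  define Q where "Q = (x$2)^2 + (x$3)^2"
  have y_sq: "(y$2)^2 + (y$3)^2 < (y$1)^2"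
    using timelike by (simp add: mink_def power2_eq_square)
  have "x$1 * y$1 = x$2 * y$2 + x$3 * y$3"
    using orth by (simp add: mink_def)
  then have "(x$1 * y$1)^2 = (x$2 * y$2 + x$3 * y$3)^2"
    by simp
  also have "\<dots> \<le> Q * ((y$2)^2 + (y$3)^2)"
  proof -
    have "(x$2 * y$2 + x$3 * y$3)^2 + (x$2 * y$3 - x$3 * y$2)^2 = Q * ((y$2)^2 + (y$3)^2)"
      unfolding Q_def by algebra
    then show ?thesis by (smt (verit) zero_le_power2)
  qed
  finally have x1_le: "(x$1)^2 * (y$1)^2 \<le> Q * ((y$2)^2 + (y$3)^2)"
    by (simp add: power_mult_distrib)
  have y1_sq_pos: "(y$1)^2 > 0"
    using y_sq by (smt (verit) zero_le_power2)
  have "Q > 0"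
  proof (rule ccontr)
    assume "\<not> Q > 0"
    then have "x$2 = 0" "x$3 = 0"
      unfolding Q_def by (smt (verit) zero_le_power2 power_eq_0_iff)+
    moreover from this have "x$1 = 0"
      using x1_le y1_sq_pos by (simp add: Q_def mult_le_0_iff)
    ultimately show False
      using \<open>x \<noteq> 0\<close> by (simp add: vec_eq_iff forall_3)
  qed
  then have "(x$1)^2 * (y$1)^2 < Q * (y$1)^2"
    using x1_le mult_strict_left_mono[OF y_sq \<open>Q > 0\<close>] by linarith
  then have "(x$1)^2 < Q"
    using y1_sq_pos by simp
  then show ?thesis
    by (simp add: mink_def Q_def power2_eq_square)
qed

lemma vec_eq_iff_re_im_part: "z = w \<longleftrightarrow> re_part z = re_part w \<and> im_part z = im_part w"
  by (auto simp: re_part_def im_part_def vec_eq_iff complex_eq_iff)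

lemma Xc_iff_re_im_part:
  "z \<in> Xc \<longleftrightarrow>
    mink (re_part z) (re_part z) - mink (im_part z) (im_part z) = -1 \<and> mink (re_part z) (im_part z) = 0"
  by (auto simp: Xc_def mink_def re_part_def im_part_def complex_eq_iff algebra_simps power2_eq_square)

lemma re_part_act: "re_part (act g z) = g *v re_part z"
  by (simp add: act_def re_part_def vec_eq_iff)

lemma im_part_act: "im_part (act g z) = g *v im_part z"
  by (simp add: act_def im_part_def vec_eq_iff)

lemma re_part_gamma_pt: "re_part (gamma_pt u) = vector [0, 0, cos u]"
  by (simp add: re_part_def gamma_pt_def vec_eq_iff forall_3)

lemma im_part_gamma_pt: "im_part (gamma_pt u) = vector [sin u, 0, 0]"
  by (simp add: im_part_def gamma_pt_def vec_eq_iff forall_3)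

lemma gamma_pt_in_Xc: "gamma_pt u \<in> Xc"
  by (simp add: Xc_iff_re_im_part re_part_gamma_pt im_part_gamma_pt mink_def flip: power2_eq_square)
    (smt (verit) sin_cos_squared_add)

lemma O12_mink: "g \<in> O12 \<Longrightarrow> mink (g *v x) (g *v y) = mink x y"
  by (simp add: O12_def)

lemma mat_1_in_O12: "mat 1 \<in> O12"
  by (simp add: O12_def)

lemma O12_mult: "a \<in> O12 \<Longrightarrow> b \<in> O12 \<Longrightarrow> a ** b \<in> O12"
  by (simp add: O12_def flip: matrix_vector_mul_assoc)

lemma O12_surj:
  assumes "g \<in> O12"
  shows "\<exists>v. g *v v = w"
proof -
  have "x = 0" if "g *v x = 0" for x
  proof -
    have "mink x (axis i 1) = 0" for i
      using O12_mink[OF assms, of x "axis i 1"] that by (simp add: mink_def)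
    from this[of 1] this[of 2] this[of 3] show "x = 0"
      by (simp add: mink_def axis_def vec_eq_iff forall_3)
  qed
  then obtain h where "h ** g = mat 1"
    using matrix_left_invertible_ker by blast
  then have "g *v (h *v w) = w"
    by (simp add: matrix_left_right_inverse matrix_vector_mul_assoc)
  then show ?thesis ..
qed

lemma G_subset_O12: "G \<subseteq> O12"
  unfolding G_def by (rule connected_component_subset)

lemma mat_1_in_G: "mat 1 \<in> G"
  unfolding G_def using mat_1_in_O12 by simp

lemma connected_G: "connected G"
  unfolding G_def by simp

lemma connected_subset_G: "T \<subseteq> O12 \<Longrightarrow> connected T \<Longrightarrow> mat 1 \<in> T \<Longrightarrow> T \<subseteq> G"
  unfolding G_def by (rule connected_component_maximal)

lemma G_mult:
  assumes "a \<in> G" "b \<in> G"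
  shows "a ** b \<in> G"
proof -
  let ?aG = "(\<lambda>b. a ** b) ` G"
  have "continuous_on G (\<lambda>b. a ** b)"
    unfolding matrix_matrix_mult_def by (intro continuous_intros)
  then have "connected ?aG"
    using connected_G by (rule connected_continuous_image)
  moreover have "a \<in> ?aG"
    using mat_1_in_G by (metis image_eqI matrix_mul_rid)
  moreover have "?aG \<subseteq> O12"
    using G_subset_O12 assms(1) by (auto intro: O12_mult)
  ultimately have "?aG \<union> G \<subseteq> G"
    using assms(1) connected_G G_subset_O12 mat_1_in_G
    by (intro connected_subset_G connected_Un) auto
  then show ?thesis
    using assms(2) by blast
qed

lemma path_from_mat_1_in_G:
  fixes f :: "real \<Rightarrow> real^3^3"
  assumes "continuous_on UNIV f" "f 0 = mat 1" "\<And>t. f t \<in> O12"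
  shows "f t \<in> G"
proof -
  have "range f \<subseteq> G"
    using assms connected_continuous_image[OF assms(1) connected_UNIV]
    by (intro connected_subset_G) (auto simp flip: assms(2))
  then show ?thesis
    by blast
qed

lemma G_preserves_Vplus:
  assumes g: "g \<in> G" and y: "y \<in> Vplus"
  shows "g *v y \<in> Vplus"
proof -
  let ?t = "\<lambda>h::real^3^3. (h *v y) $ 1"
  have "continuous_on G ?t"
    unfolding matrix_vector_mult_def by (intro continuous_intros)
  then have "connected (?t ` G)"
    using connected_G by (rule connected_continuous_image)
  have mink_hy: "mink (h *v y) (h *v y) = mink y y" if "h \<in> G" for h
    using that G_subset_O12 O12_mink by blast
  have y_pos: "mink y y > 0" "y$1 > 0"
    using y by (auto simp: Vplus_def)
  have t_nonzero: "?t h \<noteq> 0" if "h \<in> G" for h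
  proof
    assume "?t h = 0"
    with mink_hy[OF that] y_pos show False
      by (simp add: mink_def) (smt (verit) zero_le_square)
  qed
  have "?t g > 0"
  proof (rule ccontr)
    assume "\<not> ?t g > 0"
    then have "0 \<in> {?t g..?t (mat 1)}"
      using y_pos by simp
    also have "\<dots> \<subseteq> ?t ` G"
      using connected_contains_Icc[OF \<open>connected (?t ` G)\<close>] g mat_1_in_G by blast
    finally show False
      using t_nonzero by auto
  qed
  with mink_hy[OF g] y_pos show ?thesis
    by (simp add: Vplus_def)
qed

definition rotation :: "real \<Rightarrow> real^3^3" where
  "rotation a = vector [vector [1, 0, 0], vector [0, cos a, - sin a], vector [0, sin a, cos a]]"

definition boost :: "real \<Rightarrow> real^3^3" where
  "boost t = vector [vector [cosh t, sinh t, 0], vector [sinh t, cosh t, 0], vector [0, 0, 1]]"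

lemma rotation_in_O12: "rotation a \<in> O12"
  unfolding O12_def rotation_def
  by (auto simp: vector3_matrix_vector_mult mink_def) (use sin_cos_squared_add[of a] in algebra)

lemma boost_in_O12: "boost t \<in> O12"
  unfolding O12_def boost_def
  by (auto simp: vector3_matrix_vector_mult mink_def) (use cosh_square_eq[of t] in algebra)

lemma rotation_in_G: "rotation a \<in> G"
  using rotation_in_O12
  by (intro path_from_mat_1_in_G) (auto simp: rotation_def mat_def vec_eq_iff forall_3 intro!: continuous_intros)

lemma boost_in_G: "boost t \<in> G"
  using boost_in_O12
  by (intro path_from_mat_1_in_G) (auto simp: boost_def mat_def vec_eq_iff forall_3 intro!: continuous_intros)

lemma rotation_fixes_e0: "rotation a *v vector [1, 0, 0] = vector [1, 0, 0]"
  by (simp add: rotation_def vector3_matrix_vector_mult)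

text \<open>The witnesses are hyperbolic polar coordinates of f: cosh t = f$1 and
  sinh t * exp (i a) = f$2 + i f$3.\<close>

lemma G_maps_e0_to_unit_timelike:
  fixes f :: "real^3"
  assumes f_unit: "mink f f = 1" and f_future: "f$1 > 0"
  shows "\<exists>h\<in>G. h *v vector [1, 0, 0] = f"
proof -
  have spatial: "(f$1)^2 - 1 = (f$2)^2 + (f$3)^2"
    using f_unit by (simp add: mink_def power2_eq_square)
  then have "\<not> (f$1)^2 < 1"
    using zero_le_power2[of "f$2"] zero_le_power2[of "f$3"] by linarith
  then have "f$1 \<ge> 1"
    using f_future by (simp add: abs_square_less_1)
  define t where "t = arcosh (f$1)"
  have cosh_t: "cosh t = f$1"
    using \<open>f$1 \<ge> 1\<close> by (simp add: t_def)
  have sinh_t: "sinh t = cmod (Complex (f$2) (f$3))"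
    using \<open>f$1 \<ge> 1\<close> spatial by (simp add: t_def sinh_arcosh_real complex_norm)
  define a where "a = Arg (Complex (f$2) (f$3))"
  have "rcis (sinh t) a = Complex (f$2) (f$3)"
    unfolding sinh_t a_def by (rule rcis_cmod_Arg)
  then have "sinh t * cos a = f$2" "sinh t * sin a = f$3"
    by (simp_all add: complex_eq_iff)
  then have "(rotation a ** boost t) *v vector [1, 0, 0] = f"
    using cosh_t
    by (simp add: rotation_def boost_def vector3_matrix_vector_mult vec_eq_iff forall_3 algebra_simps
        flip: matrix_vector_mul_assoc)
  moreover have "rotation a ** boost t \<in> G"
    using rotation_in_G boost_in_G by (rule G_mult)
  ultimately show ?thesis ..
qed

lemma rotation_maps_e2_to_unit_spacelike:
  fixes w :: "real^3"
  assumes w_unit: "mink w w = -1" and w_space: "w$1 = 0"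
  shows "\<exists>b. rotation b *v vector [0, 0, 1] = w"
proof -
  have "cmod (Complex (w$3) (- w$2)) = 1"
    using w_unit w_space by (simp add: mink_def complex_norm power2_eq_square algebra_simps)
  then have "rcis 1 (Arg (Complex (w$3) (- w$2))) = Complex (w$3) (- w$2)"
    using rcis_cmod_Arg by metis
  then have "rotation (Arg (Complex (w$3) (- w$2))) *v vector [0, 0, 1] = w"
    using w_space by (simp add: rotation_def vector3_matrix_vector_mult vec_eq_iff forall_3 complex_eq_iff)
  then show ?thesis ..
qed

lemma G_maps_e0_e2_to_unit_frame:
  fixes f w :: "real^3"
  assumes "mink f f = 1" "f$1 > 0" and w_unit: "mink w w = -1" and orth: "mink f w = 0"
  shows "\<exists>g\<in>G. g *v vector [1, 0, 0] = f \<and> g *v vector [0, 0, 1] = w"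
proof -
  obtain h where h: "h \<in> G" "h *v vector [1, 0, 0] = f"
    using G_maps_e0_to_unit_timelike assms(1,2) by blast
  have h_O12: "h \<in> O12"
    using h(1) G_subset_O12 by blast
  obtain v where v: "h *v v = w"
    using O12_surj[OF h_O12] by blast
  have "mink v v = -1"
    using O12_mink[OF h_O12, of v v] v w_unit by simp
  moreover have "v$1 = 0"
    using O12_mink[OF h_O12, of "vector [1, 0, 0]" v] h(2) v orth by (simp add: mink_def)
  ultimately obtain b where b: "rotation b *v vector [0, 0, 1] = v"
    using rotation_maps_e2_to_unit_spacelike by blast
  have "h ** rotation b \<in> G"
    using h(1) rotation_in_G by (rule G_mult)
  moreover have "(h ** rotation b) *v vector [1, 0, 0] = f" "(h ** rotation b) *v vector [0, 0, 1] = w"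
    using h(2) b v by (simp_all add: rotation_fixes_e0 flip: matrix_vector_mul_assoc)
  ultimately show ?thesis
    by blast
qed

lemma act_in_Xc: "g \<in> O12 \<Longrightarrow> z \<in> Xc \<Longrightarrow> act g z \<in> Xc"
  by (simp add: Xc_iff_re_im_part re_part_act im_part_act O12_mink)

lemma act_gamma_pt_in_Tplus:
  assumes "g \<in> G" "u \<in> {0<..<pi}"
  shows "act g (gamma_pt u) \<in> Tplus"
proof -
  have "vector [sin u, 0, 0] \<in> Vplus"
    using assms(2) sin_gt_zero by (simp add: Vplus_def mink_def)
  then have "im_part (act g (gamma_pt u)) \<in> Vplus"
    using assms(1) G_preserves_Vplus by (simp add: im_part_act im_part_gamma_pt)
  moreover have "act g (gamma_pt u) \<in> Xc"
    using assms(1) G_subset_O12 gamma_pt_in_Xc act_in_Xc by blast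
  ultimately show ?thesis
    by (simp add: Tplus_def)
qed

lemma Tplus_in_orbit:
  assumes "z \<in> Tplus"
  shows "\<exists>g\<in>G. \<exists>u\<in>{0<..<pi}. z = act g (gamma_pt u)"
proof -
  define x y where "x = re_part z" and "y = im_part z"
  have xx: "mink x x = mink y y - 1" and xy: "mink y x = 0" and y: "mink y y > 0" "y$1 > 0"
    using assms by (auto simp: Tplus_def Xc_iff_re_im_part Vplus_def x_def y_def mink_commute)
  have "mink x x \<le> 0"
    using mink_orthogonal_timelike_neg[of x y] xy y(1) by (cases "x = 0") (auto simp: mink_commute mink_def)
  define s where "s = sqrt (mink y y)"
  have s: "0 < s" "s \<le> 1" "s^2 = mink y y"
    using y(1) xx \<open>mink x x \<le> 0\<close> by (simp_all add: s_def)
  define u where "u = arcsin s"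
  have sin_u: "sin u = s"
    using s by (simp add: u_def)
  have cos_u: "cos u = sqrt (1 - s^2)"
    using s by (simp add: u_def cos_arcsin)
  have u: "u \<in> {0<..<pi}"
    using s arcsin_bounded[of s] arcsin_less_mono[of 0 s] pi_gt_zero by (simp add: u_def)
  have cos_u_sq: "(cos u)^2 = - mink x x" and cos_nonneg: "cos u \<ge> 0"
    using s xx \<open>mink x x \<le> 0\<close> by (simp_all add: cos_u)
  define f where "f = (1 / sin u) *\<^sub>R y"
  have f: "mink f f = 1" "f$1 > 0"
    using s y(2) by (simp_all add: f_def sin_u mink_scaleR power_divide flip: power2_eq_square s(3))
  have y_eq: "y = sin u *\<^sub>R f"
    using s by (simp add: f_def sin_u)
  obtain g where g: "g \<in> G" "g *v vector [1, 0, 0] = f" "g *v vector [0, 0, cos u] = x"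
  proof (cases "x = 0")
    case True
    then have "cos u = 0"
      using cos_u_sq by (simp add: mink_def)
    then have "vector [0, 0, cos u] = (0 :: real^3)"
      by (simp add: vec_eq_iff forall_3)
    with True show ?thesis
      using that G_maps_e0_to_unit_timelike[OF f] by auto
  next
    case False
    then have "mink x x < 0"
      using mink_orthogonal_timelike_neg[of x y] xy y(1) by (simp add: mink_commute)
    then have "cos u > 0"
      using cos_u_sq cos_nonneg by (cases "cos u = 0") auto
    define w where "w = (1 / cos u) *\<^sub>R x"
    have "mink x x = - ((cos u)^2)"
      using cos_u_sq by simp
    then have "mink w w = -1" "mink f w = 0"
      using \<open>cos u > 0\<close> xy by (simp_all add: w_def f_def mink_scaleR power2_eq_square)
    with f obtain g where "g \<in> G" "g *v vector [1, 0, 0] = f" "g *v vector [0, 0, 1] = w"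
      using G_maps_e0_e2_to_unit_frame by blast
    moreover have "vector [0, 0, cos u] = cos u *\<^sub>R (vector [0, 0, 1] :: real^3)"
      by (simp add: vec_eq_iff forall_3)
    ultimately show ?thesis
      using that \<open>cos u > 0\<close> by (simp add: matrix_vector_mult_scaleR w_def)
  qed
  have "vector [sin u, 0, 0] = sin u *\<^sub>R (vector [1, 0, 0] :: real^3)"
    by (simp add: vec_eq_iff forall_3)
  then have "z = act g (gamma_pt u)"
    using g y_eq
    by (simp add: vec_eq_iff_re_im_part re_part_act im_part_act re_part_gamma_pt im_part_gamma_pt
        matrix_vector_mult_scaleR x_def y_def)
  with g(1) u show ?thesis
    by blast
qed

lemma Tplus_eq_orbits: "Tplus = (\<Union>g\<in>G. act g ` gamma_plus)"
proof
  show "Tplus \<subseteq> (\<Union>g\<in>G. act g ` gamma_plus)"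
    using Tplus_in_orbit unfolding gamma_plus_def by blast
  show "(\<Union>g\<in>G. act g ` gamma_plus) \<subseteq> Tplus"
    using act_gamma_pt_in_Tplus unfolding gamma_plus_def by blast
qed

definition vec_cnj :: "complex^3 \<Rightarrow> complex^3" where
  "vec_cnj z = (\<chi> i. cnj (z$i))"

lemma re_part_vec_cnj: "re_part (vec_cnj z) = re_part z"
  by (simp add: vec_cnj_def re_part_def)

lemma im_part_vec_cnj: "im_part (vec_cnj z) = - im_part z"
  by (simp add: vec_cnj_def im_part_def vec_eq_iff)

lemma vec_cnj_vec_cnj [simp]: "vec_cnj (vec_cnj z) = z"
  by (simp add: vec_cnj_def vec_eq_iff)

lemma matrix_vector_mult_uminus_right: "A *v (- x) = - (A *v (x :: 'a::comm_ring_1^'n))"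
  by (simp add: matrix_vector_mult_def vec_eq_iff sum_negf[symmetric])

lemma act_vec_cnj: "act g (vec_cnj z) = vec_cnj (act g z)"
  by (simp add: vec_eq_iff_re_im_part re_part_act im_part_act re_part_vec_cnj im_part_vec_cnj
      matrix_vector_mult_uminus_right)

lemma vec_cnj_gamma_pt: "vec_cnj (gamma_pt u) = gamma_pt (- u)"
  by (simp add: vec_eq_iff_re_im_part re_part_vec_cnj im_part_vec_cnj re_part_gamma_pt im_part_gamma_pt
      vec_eq_iff forall_3)

lemma Vminus_iff: "y \<in> Vminus \<longleftrightarrow> - y \<in> Vplus"
  unfolding Vminus_def by (metis image_iff minus_minus)

lemma vec_cnj_in_Tplus_iff: "vec_cnj z \<in> Tplus \<longleftrightarrow> z \<in> Tminus"
  by (simp add: Tplus_def Tminus_def Xc_iff_re_im_part re_part_vec_cnj im_part_vec_cnj Vminus_iff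
      mink_uminus_left mink_uminus_right)

lemma Tminus_eq_vec_cnj_Tplus: "Tminus = vec_cnj ` Tplus"
proof
  show "Tminus \<subseteq> vec_cnj ` Tplus"
    using vec_cnj_in_Tplus_iff by (metis image_eqI subsetI vec_cnj_vec_cnj)
  show "vec_cnj ` Tplus \<subseteq> Tminus"
    by (auto simp flip: vec_cnj_in_Tplus_iff)
qed

lemma gamma_minus_eq_vec_cnj_gamma_plus: "gamma_minus = vec_cnj ` gamma_plus"
proof -
  have "{-pi<..<0} = uminus ` {0<..<pi}"
    by simp
  then show ?thesis
    by (simp only: gamma_minus_def gamma_plus_def image_image vec_cnj_gamma_pt)
qed

theorem proposition2:
  shows "Tplus = (\<Union>g\<in>G. act g ` gamma_plus) \<and> Tminus = (\<Union>g\<in>G. act g ` gamma_minus)"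
proof
  show "Tplus = (\<Union>g\<in>G. act g ` gamma_plus)"
    by (rule Tplus_eq_orbits)
  have "Tminus = vec_cnj ` (\<Union>g\<in>G. act g ` gamma_plus)"
    by (simp add: Tminus_eq_vec_cnj_Tplus Tplus_eq_orbits)
  also have "\<dots> = (\<Union>g\<in>G. act g ` gamma_minus)"
    by (simp add: image_UN image_image act_vec_cnj gamma_minus_eq_vec_cnj_gamma_plus)
  finally show "Tminus = (\<Union>g\<in>G. act g ` gamma_minus)" .
qed

end
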